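(* Let $k\ge2$, $n=2^k-1$, and let $C$ be the binary simplex $(n,k)$ code. For every correctable erasure pattern with at least one erased node, there exists an erased node that allows for easy repair.
   Context: The binary simplex $(n,k)$ code has generator matrix $G\in\mathbb F_2^{k\times n}$ whose columns $g_1,\dots,g_n$ are all the distinct nonzero vectors of $\mathbb F_2^k$. Nodes are the coordinates $c_1,\dots,c_n$ of codewords $c=uG$. An erasure pattern is a set $S^e\subseteq\{1,\dots,n\}$ of erased nodes; the other nodes are live. The pattern is correctable if no two distinct codewords coincide on all live positions. A node $c_i$ is related to distinct nodes $c_{j_1},\dots,c_{j_\gamma}$ (all different from $c_i$) if $g_i=g_{j_1}+\dots+g_{j_\gamma}$. An erased node allows for easy repair if it is related to $\gamma\le 2$ nodes which are all live. *)

theory Defs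
  imports Main
begin

text \<open>Vectors of F_2^k are modelled as functions nat => bool (True = 1) vanishing
  outside {0..<k}.  Nodes are indexed 0..<n.\<close>

definition vecs :: "nat \<Rightarrow> (nat \<Rightarrow> bool) set" where
  "vecs k = {v. \<forall>t\<ge>k. \<not> v t}"

definition zero_vec :: "nat \<Rightarrow> bool" where
  "zero_vec = (\<lambda>t. False)"

definition vsum :: "(nat \<Rightarrow> nat \<Rightarrow> bool) \<Rightarrow> nat set \<Rightarrow> (nat \<Rightarrow> bool)" where
  "vsum g J = (\<lambda>t. odd (card {j\<in>J. g j t}))"

definition ip :: "nat \<Rightarrow> (nat \<Rightarrow> bool) \<Rightarrow> (nat \<Rightarrow> bool) \<Rightarrow> bool" where
  "ip k u v = odd (card {t\<in>{0..<k}. u t \<and> v t})"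

text \<open>g is a generator matrix (columns g 0, ..., g (n-1)) of the binary simplex (n,k) code:
  its columns are exactly the distinct nonzero vectors of F_2^k.\<close>
definition simplex_gen :: "nat \<Rightarrow> nat \<Rightarrow> (nat \<Rightarrow> nat \<Rightarrow> bool) \<Rightarrow> bool" where
  "simplex_gen k n g \<longleftrightarrow> bij_betw g {0..<n} (vecs k - {zero_vec})"

definition codeword :: "nat \<Rightarrow> nat \<Rightarrow> (nat \<Rightarrow> nat \<Rightarrow> bool) \<Rightarrow> (nat \<Rightarrow> bool) \<Rightarrow> (nat \<Rightarrow> bool)" where
  "codeword k n g u = (\<lambda>i. if i < n then ip k u (g i) else False)"

definition code :: "nat \<Rightarrow> nat \<Rightarrow> (nat \<Rightarrow> nat \<Rightarrow> bool) \<Rightarrow> (nat \<Rightarrow> bool) set" where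
  "code k n g = codeword k n g ` vecs k"

definition correctable :: "nat \<Rightarrow> nat \<Rightarrow> (nat \<Rightarrow> nat \<Rightarrow> bool) \<Rightarrow> nat set \<Rightarrow> bool" where
  "correctable k n g Se \<longleftrightarrow>
     (\<forall>c\<in>code k n g. \<forall>c'\<in>code k n g. c \<noteq> c' \<longrightarrow> (\<exists>i\<in>{0..<n} - Se. c i \<noteq> c' i))"

definition related :: "nat \<Rightarrow> (nat \<Rightarrow> nat \<Rightarrow> bool) \<Rightarrow> nat \<Rightarrow> nat set \<Rightarrow> bool" where
  "related n g i J \<longleftrightarrow> J \<subseteq> {0..<n} \<and> i \<notin> J \<and> g i = vsum g J"

definition easy_repair :: "nat \<Rightarrow> (nat \<Rightarrow> nat \<Rightarrow> bool) \<Rightarrow> nat set \<Rightarrow> nat \<Rightarrow> bool" where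
  "easy_repair n g Se i \<longleftrightarrow>
     i \<in> Se \<and> (\<exists>J. related n g i J \<and> card J \<le> 2 \<and> J \<inter> Se = {})"

end

theory Submission
  imports Defs
begin

text \<open>Suppose no erased node allows easy repair. Then the live columns together with 0 are
  closed under addition: if g a + g b (a, b live) were an erased column, that erased node would
  be related to two live nodes. So they form a subspace V of F_2^k, and V is proper since it
  misses the erased columns. A proper subspace has a nonzero orthogonal vector u. The codeword
  uG vanishes on every live node, like the zero codeword, but it is nonzero because the unit
  vectors occur among the columns, contradicting correctability.\<close>

definition vxor :: "(nat \<Rightarrow> bool) \<Rightarrow> (nat \<Rightarrow> bool) \<Rightarrow> (nat \<Rightarrow> bool)" where
  "vxor v w = (\<lambda>t. v t \<noteq> w t)"

definition f2_subspace :: "nat \<Rightarrow> (nat \<Rightarrow> bool) set \<Rightarrow> bool" where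
  "f2_subspace k V \<longleftrightarrow> zero_vec \<in> V \<and> V \<subseteq> vecs k \<and> (\<forall>v\<in>V. \<forall>w\<in>V. vxor v w \<in> V)"

lemma vxor_in_vecs: "v \<in> vecs k \<Longrightarrow> w \<in> vecs k \<Longrightarrow> vxor v w \<in> vecs k"
  by (simp add: vecs_def vxor_def)

lemma vxor_cancel_right: "vxor (vxor v w) w = v"
  by (auto simp: vxor_def)

lemma vxor_eq_zero_iff: "vxor v w = zero_vec \<longleftrightarrow> v = w"
  by (auto simp: vxor_def zero_vec_def fun_eq_iff)

lemma vxor_zero_left: "vxor zero_vec v = v"
  by (simp add: vxor_def zero_vec_def)

lemma vxor_zero_right: "vxor v zero_vec = v"
  by (simp add: vxor_def zero_vec_def)

lemma zero_vec_in_vecs: "zero_vec \<in> vecs k"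
  by (simp add: vecs_def zero_vec_def)

lemma vecs_iff_vecs_Suc: "v \<in> vecs k \<longleftrightarrow> v \<in> vecs (Suc k) \<and> \<not> v k"
  unfolding vecs_def by (auto simp: Suc_le_eq) (metis le_neq_implies_less)

lemma nonzero_vec_witness:
  assumes "v \<in> vecs k" "v \<noteq> zero_vec"
  obtains t where "t < k" "v t"
proof -
  from assms(2) obtain t where "v t" by (auto simp: zero_vec_def)
  moreover from assms(1) this have "t < k" by (auto simp: vecs_def not_less[symmetric])
  ultimately show thesis using that by blast
qed

lemma vsum_doubleton:
  assumes "a \<noteq> b"
  shows "vsum g {a, b} = vxor (g a) (g b)"
proof
  fix t
  have "{j\<in>{a, b}. g j t} = (if g a t then {a} else {}) \<union> (if g b t then {b} else {})"
    by auto
  then show "vsum g {a, b} t = vxor (g a) (g b) t"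
    using assms by (simp add: vsum_def vxor_def)
qed

lemma ip_0 [simp]: "\<not> ip 0 u v"
  by (simp add: ip_def)

lemma ip_Suc: "ip (Suc k) u v \<longleftrightarrow> ip k u v \<noteq> (u k \<and> v k)"
proof -
  have "{t\<in>{0..<Suc k}. u t \<and> v t} =
        (if u k \<and> v k then insert k else id) {t\<in>{0..<k}. u t \<and> v t}"
    by (auto simp: less_Suc_eq)
  then show ?thesis by (simp add: ip_def)
qed

lemma ip_cong_left: "(\<And>t. t < k \<Longrightarrow> u t = u' t) \<Longrightarrow> ip k u v = ip k u' v"
  by (induction k) (auto simp: ip_Suc)

lemma ip_vxor_right: "ip k u (vxor v w) \<longleftrightarrow> ip k u v \<noteq> ip k u w"
  by (induction k) (auto simp: ip_Suc vxor_def)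

lemma ip_zero_left: "(\<And>t. t < k \<Longrightarrow> \<not> u t) \<Longrightarrow> \<not> ip k u v"
  by (induction k) (auto simp: ip_Suc)

lemma ip_zero_right: "(\<And>t. t < k \<Longrightarrow> \<not> v t) \<Longrightarrow> \<not> ip k u v"
  by (induction k) (auto simp: ip_Suc)

lemma ip_unit_right: "t < k \<Longrightarrow> ip k u (\<lambda>s. s = t) = u t"
  by (induction k) (auto simp: ip_Suc less_Suc_eq ip_zero_right)

lemma f2_subspace_slice:
  assumes "f2_subspace (Suc k) V"
  shows "f2_subspace k {v\<in>V. \<not> v k}"
  using assms unfolding f2_subspace_def
  by (auto simp: zero_vec_def vxor_def vecs_iff_vecs_Suc[of _ k] subset_iff)

lemma f2_subspace_eq_vecs_Suc:
  assumes V: "f2_subspace (Suc k) V" and slice: "vecs k \<subseteq> V" and w: "w \<in> V" "w k"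
  shows "V = vecs (Suc k)"
proof
  show "V \<subseteq> vecs (Suc k)" using V by (simp add: f2_subspace_def)
next
  show "vecs (Suc k) \<subseteq> V"
  proof
    fix x assume x: "x \<in> vecs (Suc k)"
    show "x \<in> V"
    proof (cases "x k")
      case False
      then show ?thesis using x slice vecs_iff_vecs_Suc by blast
    next
      case True
      have "w \<in> vecs (Suc k)" using V w(1) by (auto simp: f2_subspace_def)
      then have "vxor x w \<in> vecs k"
        using x True w(2) by (simp add: vecs_iff_vecs_Suc[of _ k] vxor_in_vecs) (simp add: vxor_def)
      then have "vxor (vxor x w) w \<in> V" using V slice w(1) by (auto simp: f2_subspace_def)
      then show ?thesis by (simp add: vxor_cancel_right)
    qed
  qed
qed

lemma orthogonal_extend:
  assumes V: "f2_subspace (Suc k) V" and u: "u \<in> vecs k"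
    and orth: "\<forall>v\<in>V. \<not> v k \<longrightarrow> \<not> ip k u v"
  obtains u' where "u' \<in> vecs (Suc k)" "\<forall>t<k. u' t = u t" "\<forall>v\<in>V. \<not> ip (Suc k) u' v"
proof (cases "\<exists>w\<in>V. w k")
  case True
  then obtain w where w: "w \<in> V" "w k" by blast
  \<comment> \<open>every v \<in> V with v k differs from w by a vector of the slice, so ip k u v = ip k u w\<close>
  define u' where "u' = u(k := ip k u w)"
  have below: "\<forall>t<k. u' t = u t" by (simp add: u'_def)
  have "u' \<in> vecs (Suc k)" using u by (auto simp: u'_def vecs_def)
  moreover have "\<not> ip (Suc k) u' v" if v: "v \<in> V" for v
  proof -
    have same: "ip k u' v = ip k u v" using below by (intro ip_cong_left) simp
    show ?thesis
    proof (cases "v k")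
      case False
      then show ?thesis using v orth same by (simp add: ip_Suc)
    next
      case True
      have "vxor v w \<in> V" using V v w(1) by (simp add: f2_subspace_def)
      moreover have "\<not> vxor v w k" using True w(2) by (simp add: vxor_def)
      ultimately have "\<not> ip k u (vxor v w)" using orth by blast
      then have "ip k u v = ip k u w" by (simp add: ip_vxor_right)
      moreover have "u' k = ip k u w" by (simp add: u'_def)
      ultimately show ?thesis using same True by (simp add: ip_Suc)
    qed
  qed
  ultimately show ?thesis using that[of u'] below by blast
next
  case False
  have "u \<in> vecs (Suc k)" using u vecs_iff_vecs_Suc by blast
  moreover have "\<forall>v\<in>V. \<not> ip (Suc k) u v" using False orth by (auto simp: ip_Suc)
  ultimately show ?thesis using that by blast
qed

lemma proper_f2_subspace_orthogonal:
  assumes "f2_subspace k V" "V \<noteq> vecs k"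
  shows "\<exists>u\<in>vecs k. u \<noteq> zero_vec \<and> (\<forall>v\<in>V. \<not> ip k u v)"
  using assms
proof (induction k arbitrary: V)
  case 0
  have "vecs 0 = {zero_vec}" by (auto simp: vecs_def zero_vec_def)
  then show ?case using 0 by (auto simp: f2_subspace_def)
next
  case (Suc k)
  let ?V0 = "{v\<in>V. \<not> v k}"
  have V0: "f2_subspace k ?V0" using Suc.prems(1) by (rule f2_subspace_slice)
  show ?case
  proof (cases "?V0 = vecs k")
    case True
    then have "vecs k \<subseteq> V" by blast
    then have "\<forall>w\<in>V. \<not> w k" using f2_subspace_eq_vecs_Suc[OF Suc.prems(1)] Suc.prems(2) by metis
    then have "\<forall>v\<in>V. \<not> ip (Suc k) (\<lambda>s. s = k) v" by (simp add: ip_Suc ip_zero_left)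
    moreover have "(\<lambda>s. s = k) \<in> vecs (Suc k)" "(\<lambda>s. s = k) \<noteq> zero_vec"
      by (auto simp: vecs_def zero_vec_def fun_eq_iff)
    ultimately show ?thesis by blast
  next
    case False
    obtain u where u: "u \<in> vecs k" "u \<noteq> zero_vec" "\<forall>v\<in>?V0. \<not> ip k u v"
      using Suc.IH[OF V0 False] by blast
    obtain u' where u': "u' \<in> vecs (Suc k)" "\<forall>t<k. u' t = u t" "\<forall>v\<in>V. \<not> ip (Suc k) u' v"
      using orthogonal_extend[OF Suc.prems(1) u(1)] u(3) by blast
    obtain t where "t < k" "u t" using nonzero_vec_witness u(1,2) by blast
    then have "u' \<noteq> zero_vec" using u'(2) by (auto simp: zero_vec_def fun_eq_iff)
    then show ?thesis using u'(1,3) by blast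
  qed
qed

lemma simplex_gen_image: "simplex_gen k n g \<Longrightarrow> g ` {0..<n} = vecs k - {zero_vec}"
  by (simp add: simplex_gen_def bij_betw_def)

lemma simplex_gen_inj: "simplex_gen k n g \<Longrightarrow> inj_on g {0..<n}"
  by (simp add: simplex_gen_def bij_betw_def)

lemma simplex_gen_column:
  assumes "simplex_gen k n g" "i < n"
  shows "g i \<in> vecs k" "g i \<noteq> zero_vec"
proof -
  have "g i \<in> g ` {0..<n}" using assms(2) by simp
  then show "g i \<in> vecs k" "g i \<noteq> zero_vec" by (simp_all add: simplex_gen_image[OF assms(1)])
qed

lemma codeword_nonzero:
  assumes g: "simplex_gen k n g" and u: "u \<in> vecs k" "u \<noteq> zero_vec"
  shows "codeword k n g u \<noteq> codeword k n g zero_vec"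
proof -
  obtain t where t: "t < k" "u t" using nonzero_vec_witness u by blast
  then have "(\<lambda>s. s = t) \<in> g ` {0..<n}"
    by (auto simp: simplex_gen_image[OF g] vecs_def zero_vec_def fun_eq_iff)
  then obtain i where i: "i < n" "g i = (\<lambda>s. s = t)" by auto
  have "codeword k n g u i" using i t by (simp add: codeword_def ip_unit_right)
  moreover have "\<not> codeword k n g zero_vec i" by (simp add: codeword_def ip_zero_left zero_vec_def)
  ultimately show ?thesis by metis
qed

lemma correctable_detects_nonzero:
  assumes g: "simplex_gen k n g" and Se: "correctable k n g Se"
    and u: "u \<in> vecs k" "u \<noteq> zero_vec"
  obtains l where "l \<in> {0..<n} - Se" "ip k u (g l)"
proof -
  have "codeword k n g u \<in> code k n g" "codeword k n g zero_vec \<in> code k n g"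
    using u(1) zero_vec_in_vecs by (simp_all add: code_def)
  then obtain l where l: "l \<in> {0..<n} - Se" "codeword k n g u l \<noteq> codeword k n g zero_vec l"
    using Se codeword_nonzero[OF g u] unfolding correctable_def by blast
  then have "ip k u (g l)" by (auto simp: codeword_def ip_zero_left zero_vec_def)
  with l(1) show thesis by (rule that)
qed

definition live_columns :: "nat \<Rightarrow> (nat \<Rightarrow> nat \<Rightarrow> bool) \<Rightarrow> nat set \<Rightarrow> (nat \<Rightarrow> bool) set" where
  "live_columns n g Se = insert zero_vec (g ` ({0..<n} - Se))"

lemma erased_column_notin_live_columns:
  assumes g: "simplex_gen k n g" and "Se \<subseteq> {0..<n}" "i \<in> Se"
  shows "g i \<notin> live_columns n g Se"
proof -
  have "i < n" using assms(2,3) by auto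
  then have "g i \<noteq> zero_vec" using simplex_gen_column(2)[OF g] by blast
  then show ?thesis
    using simplex_gen_inj[OF g] assms(2,3) by (auto simp: live_columns_def inj_on_def)
qed

lemma live_column_sum_is_live:
  assumes g: "simplex_gen k n g" and no_repair: "\<forall>i\<in>Se. \<not> easy_repair n g Se i"
    and ab: "a \<in> {0..<n} - Se" "b \<in> {0..<n} - Se" "a \<noteq> b"
  shows "vxor (g a) (g b) \<in> g ` ({0..<n} - Se)"
proof -
  have "vxor (g a) (g b) \<in> vecs k - {zero_vec}"
    using ab simplex_gen_column[OF g] simplex_gen_inj[OF g]
    by (simp add: vxor_in_vecs vxor_eq_zero_iff inj_on_eq_iff)
  then obtain e where e: "e < n" "g e = vxor (g a) (g b)"
    by (auto simp: simplex_gen_image[OF g, symmetric])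
  moreover have "g a \<noteq> zero_vec" "g b \<noteq> zero_vec" using ab simplex_gen_column(2)[OF g] by auto
  ultimately have "e \<noteq> a" "e \<noteq> b" by (auto simp: vxor_def zero_vec_def fun_eq_iff)
  have "related n g e {a, b}"
    using e ab \<open>e \<noteq> a\<close> \<open>e \<noteq> b\<close> by (auto simp: related_def vsum_doubleton)
  moreover have "card {a, b} \<le> 2" "{a, b} \<inter> Se = {}"
    using ab by (auto simp: card_insert_if)
  ultimately have "e \<notin> Se" using no_repair by (auto simp: easy_repair_def)
  then show ?thesis using e by (metis Diff_iff atLeastLessThan_iff image_eqI zero_le)
qed

lemma live_columns_f2_subspace:
  assumes g: "simplex_gen k n g" and no_repair: "\<forall>i\<in>Se. \<not> easy_repair n g Se i"
  shows "f2_subspace k (live_columns n g Se)"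
  unfolding f2_subspace_def
proof (intro conjI ballI)
  show "zero_vec \<in> live_columns n g Se" by (simp add: live_columns_def)
  show "live_columns n g Se \<subseteq> vecs k"
    using simplex_gen_column[OF g] zero_vec_in_vecs by (auto simp: live_columns_def)
next
  fix v w assume v: "v \<in> live_columns n g Se" and w: "w \<in> live_columns n g Se"
  show "vxor v w \<in> live_columns n g Se"
  proof (cases "v = zero_vec \<or> w = zero_vec \<or> v = w")
    case True
    then show ?thesis using v w
      by (auto simp: vxor_zero_left vxor_zero_right vxor_eq_zero_iff live_columns_def)
  next
    case False
    then obtain a b where "a \<in> {0..<n} - Se" "b \<in> {0..<n} - Se" "a \<noteq> b" "v = g a" "w = g b"
      using v w unfolding live_columns_def by blast
    then show ?thesis
      using live_column_sum_is_live[OF g no_repair] by (simp add: live_columns_def)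
  qed
qed

theorem lemma3p3:
  fixes k n :: nat and g :: "nat \<Rightarrow> nat \<Rightarrow> bool" and Se :: "nat set"
  assumes "k \<ge> 2" and "n = 2 ^ k - 1" and "simplex_gen k n g"
    and "Se \<subseteq> {0..<n}" and "Se \<noteq> {}" and "correctable k n g Se"
  shows "\<exists>i\<in>Se. easy_repair n g Se i"
proof (rule ccontr)
  assume "\<not> (\<exists>i\<in>Se. easy_repair n g Se i)"
  then have V: "f2_subspace k (live_columns n g Se)"
    using live_columns_f2_subspace[OF assms(3)] by blast
  obtain i where "i \<in> Se" using assms(5) by blast
  then have "g i \<in> vecs k" "g i \<notin> live_columns n g Se"
    using assms(3,4) simplex_gen_column erased_column_notin_live_columns by auto
  then obtain u where u: "u \<in> vecs k" "u \<noteq> zero_vec"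
    and orth: "\<forall>v\<in>live_columns n g Se. \<not> ip k u v"
    using proper_f2_subspace_orthogonal[OF V] by blast
  obtain l where "l \<in> {0..<n} - Se" "ip k u (g l)"
    using correctable_detects_nonzero[OF assms(3,6) u] .
  then show False using orth by (auto simp: live_columns_def)
qed

end
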